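(* Let $T$ be a tree on at least three vertices and let $S \subseteq V(T)$ satisfy conditions (I) and (II) below. Then every vertex $v \in S$ lies on a path between two leaves $\ell, \ell' \in S$. (I) $S$ contains at least one leaf of $T$. (II) For every leaf $\ell \in S$, every edge $\{a,b\}$ of $T$ with $a$ closer to $\ell$ than $b$ satisfies: (i) if $a,b\notin S$ then $N(b)\cap S=\emptyset$; (ii) if $a\notin S$, $b\in S$ then $|N(b)\cap S|\le 1$; (iii) if $a\in S$, $b\notin S$ then $|(N(b)\cap S)\setminus\{a\}|=1$; (iv) if $a,b\in S$ then $|(N(b)\cap S)\setminus\{a\}|=0$.
   Context: $N(b)$ is the set of neighbors of $b$; distances are graph distances in $T$; a leaf is a vertex of degree one. *)

theory Defs
  imports Main
begin

definition gwalk :: "'a set set \<Rightarrow> 'a list \<Rightarrow> bool" where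
  "gwalk E p \<longleftrightarrow> p \<noteq> [] \<and> (\<forall>i. Suc i < length p \<longrightarrow> {p ! i, p ! Suc i} \<in> E)"

definition gpath :: "'a set set \<Rightarrow> 'a list \<Rightarrow> bool" where
  "gpath E p \<longleftrightarrow> gwalk E p \<and> distinct p"

definition simple_graph :: "'a set \<Rightarrow> 'a set set \<Rightarrow> bool" where
  "simple_graph V E \<longleftrightarrow> finite V \<and>
     (\<forall>e\<in>E. \<exists>u v. e = {u, v} \<and> u \<noteq> v \<and> u \<in> V \<and> v \<in> V)"

definition gconnected :: "'a set \<Rightarrow> 'a set set \<Rightarrow> bool" where
  "gconnected V E \<longleftrightarrow> (\<forall>u\<in>V. \<forall>v\<in>V. \<exists>p. gpath E p \<and> hd p = u \<and> last p = v)"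

definition gacyclic :: "'a set set \<Rightarrow> bool" where
  "gacyclic E \<longleftrightarrow> \<not> (\<exists>c. gpath E c \<and> length c \<ge> 3 \<and> {last c, hd c} \<in> E)"

definition is_tree :: "'a set \<Rightarrow> 'a set set \<Rightarrow> bool" where
  "is_tree V E \<longleftrightarrow> simple_graph V E \<and> V \<noteq> {} \<and> gconnected V E \<and> gacyclic E"

definition nbrs :: "'a set set \<Rightarrow> 'a \<Rightarrow> 'a set" where
  "nbrs E b = {x. {b, x} \<in> E}"

definition is_leaf :: "'a set \<Rightarrow> 'a set set \<Rightarrow> 'a \<Rightarrow> bool" where
  "is_leaf V E v \<longleftrightarrow> v \<in> V \<and> card (nbrs E v) = 1"

definition gdist :: "'a set set \<Rightarrow> 'a \<Rightarrow> 'a \<Rightarrow> nat" where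
  "gdist E u v = (LEAST n. \<exists>p. gwalk E p \<and> hd p = u \<and> last p = v \<and> length p = Suc n)"

end

(*
  Fix a leaf l in S and extend the geodesic from l to v (a walk whose i-th vertex is at distance
  i from l) step by step, keeping its last vertex u in S. Unless u is a leaf other than l, it
  has a neighbour c farther from l: in a tree, at most one neighbour of u is not farther from l
  than u, since two such neighbours would close a cycle with their geodesics. If c is not in S,
  condition (iii) supplies a neighbour w of c in S other than u, which again lies farther. A
  geodesic visits distinct vertices, so the growth stops at a leaf l' in S, and the geodesic
  from l to l' is a path through v.

  Only condition (iii) is needed.
*)
theory Submission
  imports Defs
begin

lemma gwalk_not_Nil: "gwalk E p \<Longrightarrow> p \<noteq> []"
  by (simp add: gwalk_def)

lemma gwalk_singleton [simp]: "gwalk E [x]"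
  by (simp add: gwalk_def)

lemma gwalk_Cons_Cons: "gwalk E (x # y # p) \<longleftrightarrow> {x, y} \<in> E \<and> gwalk E (y # p)"
proof
  assume "gwalk E (x # y # p)"
  then show "{x, y} \<in> E \<and> gwalk E (y # p)"
    unfolding gwalk_def by (metis Suc_less_eq length_Cons list.distinct(1) nth_Cons_0 nth_Cons_Suc zero_less_Suc)
next
  assume "{x, y} \<in> E \<and> gwalk E (y # p)"
  then show "gwalk E (x # y # p)"
    unfolding gwalk_def by (auto simp: less_Suc_eq_0_disj)
qed

lemma gwalk_append:
  "gwalk E p \<Longrightarrow> gwalk E q \<Longrightarrow> {last p, hd q} \<in> E \<Longrightarrow> gwalk E (p @ q)"
proof (induction p rule: induct_list012)
  case 1 then show ?case by (simp add: gwalk_def)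
next
  case (2 x) then show ?case by (cases q) (auto simp: gwalk_Cons_Cons gwalk_not_Nil)
next
  case (3 x y zs) then show ?case by (auto simp: gwalk_Cons_Cons)
qed

lemma gwalk_join:
  "gwalk E p \<Longrightarrow> gwalk E q \<Longrightarrow> last p = hd q \<Longrightarrow> gwalk E (p @ tl q)"
proof (induction p rule: induct_list012)
  case 1 then show ?case by (simp add: gwalk_def)
next
  case (2 x) then show ?case by (cases q) (auto simp: gwalk_not_Nil)
next
  case (3 x y zs) then show ?case by (auto simp: gwalk_Cons_Cons)
qed

lemma last_append_tl: "q \<noteq> [] \<Longrightarrow> last p = hd q \<Longrightarrow> p \<noteq> [] \<Longrightarrow> last (p @ tl q) = last q"
  by (cases q) auto

lemma gwalk_rev: "gwalk E p \<Longrightarrow> gwalk E (rev p)"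
proof (induction p rule: induct_list012)
  case (3 x y zs)
  then have "gwalk E (rev (y # zs))" "{y, x} \<in> E"
    by (auto simp: gwalk_Cons_Cons insert_commute)
  then show ?case using gwalk_append[of E "rev (y # zs)" "[x]"] by simp
qed (simp_all add: gwalk_def)

lemma gwalk_take_Suc:
  assumes "gwalk E p" "i < length p"
  shows "gwalk E (take (Suc i) p)" "hd (take (Suc i) p) = hd p" "last (take (Suc i) p) = p ! i"
proof -
  show "gwalk E (take (Suc i) p)" using assms(1) unfolding gwalk_def by simp
  show "hd (take (Suc i) p) = hd p" using assms by (cases p) auto
  show "last (take (Suc i) p) = p ! i" using assms by (simp add: take_Suc_conv_app_nth)
qed

lemma gwalk_drop: "gwalk E p \<Longrightarrow> n < length p \<Longrightarrow> gwalk E (drop n p)"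
  unfolding gwalk_def by (simp add: add.commute)

lemma gwalk_imp_gpath:
  assumes "gwalk E p"
  shows "\<exists>q. gpath E q \<and> hd q = hd p \<and> last q = last p \<and> set q \<subseteq> set p"
  using assms
proof (induction "length p" arbitrary: p rule: less_induct)
  case less
  show ?case
  proof (cases "distinct p")
    case True then show ?thesis using less.prems by (auto simp: gpath_def)
  next
    case False
    then obtain i j where ij: "i < j" "j < length p" "p ! i = p ! j"
      by (metis distinct_conv_nth linorder_neqE_nat)
    then have "p \<noteq> []" by auto
    note take = gwalk_take_Suc[OF less.prems order.strict_trans[OF ij(1,2)]]
    have hd_drop: "hd (drop j p) = p ! j"
      using ij by (simp add: hd_drop_conv_nth)
    define p' where "p' = take (Suc i) p @ tl (drop j p)"
    have "gwalk E p'"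
      unfolding p'_def using take ij less.prems hd_drop by (intro gwalk_join gwalk_drop) simp_all
    moreover have "length p' < length p"
      unfolding p'_def using ij by auto
    ultimately obtain q where q: "gpath E q" "hd q = hd p'" "last q = last p'" "set q \<subseteq> set p'"
      using less.hyps by blast
    have "hd p' = hd p" "last p' = last p"
      unfolding p'_def using take ij hd_drop \<open>p \<noteq> []\<close> last_append_tl[of "drop j p" "take (Suc i) p"]
      by auto
    moreover have "set p' \<subseteq> set p"
      unfolding p'_def using set_take_subset[of "Suc i" p] set_drop_subset[of j p]
      by (cases "drop j p") auto
    ultimately show ?thesis using q by auto
  qed
qed

lemma simple_graph_edgeD:
  "simple_graph V E \<Longrightarrow> {a, b} \<in> E \<Longrightarrow> a \<noteq> b \<and> a \<in> V \<and> b \<in> V"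
  unfolding simple_graph_def by (metis doubleton_eq_iff)

lemma gwalk_subset:
  assumes "simple_graph V E" "gwalk E p" "hd p \<in> V"
  shows "set p \<subseteq> V"
proof
  fix x assume "x \<in> set p"
  then obtain i where i: "i < length p" "x = p ! i" by (metis in_set_conv_nth)
  show "x \<in> V"
  proof (cases i)
    case 0 then show ?thesis using i assms by (simp add: hd_conv_nth)
  next
    case (Suc j)
    then have "{p ! j, p ! i} \<in> E" using assms(2) i unfolding gwalk_def by simp
    then show ?thesis using simple_graph_edgeD[OF assms(1)] i by blast
  qed
qed

lemma gdist_shortest_walk:
  assumes "gwalk E p" "hd p = u" "last p = v"
  obtains q where "gwalk E q" "hd q = u" "last q = v" "length q = Suc (gdist E u v)"
proof -
  have "\<exists>n p. gwalk E p \<and> hd p = u \<and> last p = v \<and> length p = Suc n"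
    using assms gwalk_not_Nil[of E p] by (intro exI[of _ "length p - 1"] exI[of _ p]) auto
  from LeastI_ex[OF this] show ?thesis
    using that unfolding gdist_def by blast
qed

lemma gdist_le_walk_length:
  assumes "gwalk E p" "hd p = u" "last p = v"
  shows "Suc (gdist E u v) \<le> length p"
proof -
  have "gdist E u v \<le> length p - 1"
    unfolding gdist_def using assms gwalk_not_Nil[of E p] by (intro Least_le exI[of _ p]) auto
  then show ?thesis using gwalk_not_Nil[OF assms(1)] by (cases p) auto
qed

lemma gdist_self [simp]: "gdist E u u = 0"
  using gdist_le_walk_length[of E "[u]" u u] by simp

lemma gdist_eq_0D:
  assumes "gwalk E p" "hd p = u" "last p = v" "gdist E u v = 0"
  shows "v = u"
proof -
  obtain q where "gwalk E q" "hd q = u" "last q = v" "length q = Suc 0"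
    using gdist_shortest_walk[OF assms(1-3)] assms(4) by metis
  then show ?thesis by (cases q) auto
qed

lemma gdist_edge_le:
  assumes "gwalk E p" "hd p = u" "last p = x" "{x, y} \<in> E"
  shows "gdist E u y \<le> Suc (gdist E u x)"
proof -
  obtain q where q: "gwalk E q" "hd q = u" "last q = x" "length q = Suc (gdist E u x)"
    using gdist_shortest_walk[OF assms(1-3)] by blast
  have "gwalk E (q @ [y])" using gwalk_append[of E q "[y]"] q assms(4) by simp
  moreover have "hd (q @ [y]) = u" using q gwalk_not_Nil[of E q] by simp
  ultimately have "Suc (gdist E u y) \<le> length (q @ [y])"
    using gdist_le_walk_length by (metis last_snoc)
  then show ?thesis using q by simp
qed

lemma gdist_nth_le:
  assumes "gwalk E p" "hd p = u" "i < length p"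
  shows "gdist E u (p ! i) \<le> i"
proof -
  have "Suc (gdist E u (p ! i)) \<le> length (take (Suc i) p)"
    using assms gwalk_take_Suc[OF assms(1,3)] by (intro gdist_le_walk_length) auto
  then show ?thesis using assms by simp
qed

definition geodesic :: "'a set set \<Rightarrow> 'a \<Rightarrow> 'a list \<Rightarrow> bool" where
  "geodesic E u p \<longleftrightarrow> gwalk E p \<and> hd p = u \<and> (\<forall>i < length p. gdist E u (p ! i) = i)"

lemma shortest_walk_geodesic:
  assumes p: "gwalk E p" "hd p = u" "length p = Suc (gdist E u (last p))"
  shows "geodesic E u p"
  unfolding geodesic_def
proof (intro conjI allI impI p(1,2))
  fix i assume i: "i < length p"
  obtain r where r: "gwalk E r" "hd r = u" "last r = p ! i" "length r = Suc (gdist E u (p ! i))"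
    using gdist_shortest_walk[of E "take (Suc i) p" u "p ! i"] gwalk_take_Suc[OF p(1) i] p(2)
    by metis
  have hd_drop: "hd (drop i p) = p ! i" using i by (simp add: hd_drop_conv_nth)
  \<comment> \<open>replacing the first i steps of p by r yields a walk to last p of length |r| + |p| - i - 1\<close>
  have "Suc (gdist E u (last p)) \<le> length (r @ tl (drop i p))"
  proof (rule gdist_le_walk_length)
    show "gwalk E (r @ tl (drop i p))" using r i hd_drop p(1) by (intro gwalk_join gwalk_drop) auto
    show "hd (r @ tl (drop i p)) = u" using r gwalk_not_Nil[of E r] by simp
    show "last (r @ tl (drop i p)) = last p"
      using last_append_tl[of "drop i p" r] r i hd_drop gwalk_not_Nil[of E r] by simp
  qed
  then have "i \<le> gdist E u (p ! i)" using p r i by simp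
  then show "gdist E u (p ! i) = i" using gdist_nth_le[OF p(1,2) i] by simp
qed

lemma geodesic_distinct: "geodesic E u p \<Longrightarrow> distinct p"
  unfolding geodesic_def distinct_conv_nth by metis

lemma geodesic_not_Nil: "geodesic E u p \<Longrightarrow> p \<noteq> []"
  unfolding geodesic_def using gwalk_not_Nil by blast

lemma gdist_last_geodesic: "geodesic E u p \<Longrightarrow> gdist E u (last p) = length p - 1"
  unfolding geodesic_def by (metis gwalk_not_Nil last_conv_nth diff_less length_greater_0_conv zero_less_one)

lemma geodesic_snoc:
  assumes "geodesic E u p" "{last p, x} \<in> E" "gdist E u x = length p"
  shows "geodesic E u (p @ [x])"
  using assms gwalk_append[of E p "[x]"] gwalk_not_Nil[of E p]
  unfolding geodesic_def by (auto simp: nth_append less_Suc_eq)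

lemma not_in_geodesic:
  assumes "geodesic E u p" "gdist E u (last p) \<le> gdist E u x" "x \<noteq> last p"
  shows "x \<notin> set p"
proof
  assume "x \<in> set p"
  then obtain i where i: "i < length p" "x = p ! i" by (metis in_set_conv_nth)
  then have "i = length p - 1"
    using assms(1,2) gdist_last_geodesic[OF assms(1)] unfolding geodesic_def by fastforce
  then show False
    using assms(3) i last_conv_nth[OF geodesic_not_Nil[OF assms(1)]] by simp
qed

lemma acyclic_nearer_nbrs_eq:
  assumes sg: "simple_graph V E" and acyclic: "gacyclic E"
    and p1: "geodesic E u p1" and p2: "geodesic E u p2"
    and e1: "{x, last p1} \<in> E" and e2: "{x, last p2} \<in> E"
    and d1: "gdist E u (last p1) \<le> gdist E u x" and d2: "gdist E u (last p2) \<le> gdist E u x"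
  shows "last p1 = last p2"
proof (rule ccontr)
  assume ne: "last p1 \<noteq> last p2"
  have x_notin: "x \<notin> set p1" "x \<notin> set p2"
    using not_in_geodesic[OF p1 d1] not_in_geodesic[OF p2 d2]
      simple_graph_edgeD[OF sg e1] simple_graph_edgeD[OF sg e2] by auto
  have ne1: "p1 \<noteq> []" and ne2: "p2 \<noteq> []"
    using p1 p2 by (simp_all add: geodesic_not_Nil)
  define W where "W = rev p1 @ tl p2"
  have "gwalk E W"
    unfolding W_def using p1 p2 ne1 by (intro gwalk_join gwalk_rev) (auto simp: geodesic_def last_rev)
  moreover have "hd W = last p1" "last W = last p2"
    unfolding W_def using ne1 ne2 p1 p2 last_append_tl[of p2 "rev p1"]
    by (auto simp: hd_rev last_rev geodesic_def)
  ultimately obtain Q where Q: "gpath E Q" "hd Q = last p1" "last Q = last p2" "set Q \<subseteq> set W"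
    using gwalk_imp_gpath by metis
  have Q_ne: "Q \<noteq> []" using Q(1) gwalk_not_Nil unfolding gpath_def by blast
  have "length Q \<ge> 2"
    using Q(2,3) ne Q_ne by (cases Q rule: remdups_adj.cases) simp_all
  then have "length (Q @ [x]) \<ge> 3" by simp
  moreover have "x \<notin> set Q"
    using Q(4) x_notin list.set_sel(2)[OF ne2] unfolding W_def by auto
  then have "gpath E (Q @ [x])"
    using gwalk_append[of E Q "[x]"] Q(1,3) e2 by (simp add: gpath_def insert_commute)
  moreover have "{last (Q @ [x]), hd (Q @ [x])} \<in> E"
    using Q(2) Q_ne e1 by simp
  ultimately show False
    using acyclic unfolding gacyclic_def by blast
qed

locale tree =
  fixes V :: "'a set" and E :: "'a set set"
  assumes is_tree: "is_tree V E"
begin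

lemma simple_graph: "simple_graph V E"
  and connected: "gconnected V E"
  and acyclic: "gacyclic E"
  and finite_V: "finite V"
  using is_tree unfolding is_tree_def simple_graph_def by auto

lemma exists_geodesic:
  assumes "u \<in> V" "v \<in> V"
  obtains p where "geodesic E u p" "last p = v"
proof -
  obtain p where "gwalk E p" "hd p = u" "last p = v"
    using connected assms unfolding gconnected_def gpath_def by blast
  then obtain q where "gwalk E q" "hd q = u" "last q = v" "length q = Suc (gdist E u v)"
    using gdist_shortest_walk by metis
  then show ?thesis
    using that shortest_walk_geodesic[of E q u] by simp
qed

lemma geodesic_subset: "geodesic E u p \<Longrightarrow> u \<in> V \<Longrightarrow> set p \<subseteq> V"
  using gwalk_subset[OF simple_graph] unfolding geodesic_def by blast

lemma geodesic_length_le: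
  assumes "geodesic E u p" "u \<in> V"
  shows "length p \<le> card V"
proof -
  have "card (set p) \<le> card V"
    using geodesic_subset[OF assms] card_mono[OF finite_V] by blast
  then show ?thesis
    using distinct_card[OF geodesic_distinct[OF assms(1)]] by simp
qed

lemma gdist_nbr_le:
  assumes "u \<in> V" "{x, y} \<in> E"
  shows "gdist E u y \<le> Suc (gdist E u x)"
proof -
  have "x \<in> V" using simple_graph_edgeD[OF simple_graph assms(2)] by blast
  then obtain p where "geodesic E u p" "last p = x"
    using exists_geodesic[OF assms(1)] by blast
  then show ?thesis
    using gdist_edge_le[of E p u x y] assms(2) unfolding geodesic_def by simp
qed

lemma nearer_nbr_unique:
  assumes "u \<in> V" "{x, w1} \<in> E" "{x, w2} \<in> E"
    "gdist E u w1 \<le> gdist E u x" "gdist E u w2 \<le> gdist E u x"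
  shows "w1 = w2"
proof -
  have "w1 \<in> V" "w2 \<in> V"
    using simple_graph_edgeD[OF simple_graph] assms(2,3) by blast+
  then obtain p1 p2 where p1: "geodesic E u p1" "last p1 = w1" and p2: "geodesic E u p2" "last p2 = w2"
    using exists_geodesic[OF assms(1)] by metis
  show ?thesis
    using acyclic_nearer_nbrs_eq[OF simple_graph acyclic p1(1) p2(1)] p1(2) p2(2) assms(2-5) by simp
qed

lemma gdist_root_nbr:
  assumes "u \<in> V" "{u, c} \<in> E"
  shows "gdist E u c = 1"
proof -
  have "gwalk E [u, c]" using assms(2) by (simp add: gwalk_Cons_Cons)
  then have "gdist E u c \<noteq> 0"
    using gdist_eq_0D[of E "[u, c]" u c] simple_graph_edgeD[OF simple_graph assms(2)] by force
  then show ?thesis using gdist_nbr_le[OF assms] by simp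
qed

lemma exists_farther_nbr:
  assumes "u \<in> V" "x \<in> V" "x \<noteq> u" "\<not> is_leaf V E x"
  obtains c where "{x, c} \<in> E" "gdist E u c = Suc (gdist E u x)"
proof -
  obtain p where p: "geodesic E u p" "last p = x"
    using exists_geodesic assms by metis
  define k where "k = length p - 1"
  have "k \<noteq> 0"
  proof
    assume "k = 0"
    then have "p = [x]"
      using p(2) geodesic_not_Nil[OF p(1)] unfolding k_def by (cases p) auto
    then show False using p(1) assms(3) unfolding geodesic_def by simp
  qed
  define w where "w = p ! (k - 1)"
  have "p ! k = x"
    using p geodesic_not_Nil[OF p(1)] unfolding k_def by (simp add: last_conv_nth)
  moreover have "Suc (k - 1) = k" "k < length p"
    using \<open>k \<noteq> 0\<close> geodesic_not_Nil[OF p(1)] unfolding k_def by auto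
  ultimately have wx: "{x, w} \<in> E"
    using p(1) unfolding geodesic_def gwalk_def w_def by (metis insert_commute)
  have "gdist E u x = k" "gdist E u w = k - 1"
    using p(1) \<open>k < length p\<close> \<open>p ! k = x\<close> unfolding geodesic_def w_def by auto
  then have dw: "gdist E u w \<le> gdist E u x" by simp
  have "w \<in> nbrs E x" "nbrs E x \<noteq> {w}"
    using wx assms(2,4) unfolding is_leaf_def nbrs_def by auto
  then obtain c where xc: "{x, c} \<in> E" and "c \<noteq> w"
    unfolding nbrs_def by blast
  then have "\<not> gdist E u c \<le> gdist E u x"
    using nearer_nbr_unique[OF assms(1) wx xc dw] by blast
  then show ?thesis
    using that xc gdist_nbr_le[OF assms(1) xc] by simp
qed


context
  fixes S :: "'a set" and l :: 'a
  assumes leaf: "is_leaf V E l"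
    and condition_iii: "\<And>a b. {a, b} \<in> E \<Longrightarrow> gdist E l a < gdist E l b \<Longrightarrow> a \<in> S \<Longrightarrow> b \<notin> S
      \<Longrightarrow> card ((nbrs E b \<inter> S) - {a}) = 1"
begin

lemma leaf_in_V: "l \<in> V"
  using leaf unfolding is_leaf_def by blast

lemma geodesic_extend_step:
  assumes p: "geodesic E l p" "last p \<in> S" and not_end: "last p = l \<or> \<not> is_leaf V E (last p)"
  obtains r where "r \<noteq> []" "geodesic E l (p @ r)" "last r \<in> S"
proof -
  define u where "u = last p"
  have "u \<in> V"
    using geodesic_subset[OF p(1) leaf_in_V] geodesic_not_Nil[OF p(1)] unfolding u_def by auto
  have du: "gdist E l u = length p - 1"
    using gdist_last_geodesic[OF p(1)] unfolding u_def .
  obtain c where uc: "{u, c} \<in> E" "gdist E l c = Suc (gdist E l u)"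
  proof (cases "u = l")
    case True
    have "nbrs E l \<noteq> {}" using leaf unfolding is_leaf_def by auto
    then obtain c where "{l, c} \<in> E" unfolding nbrs_def by blast
    then show ?thesis using that gdist_root_nbr[OF leaf_in_V] True by simp
  next
    case False
    moreover have "\<not> is_leaf V E u"
      using False not_end unfolding u_def by blast
    ultimately show ?thesis
      using that exists_farther_nbr[OF leaf_in_V \<open>u \<in> V\<close>] by blast
  qed
  have pc: "geodesic E l (p @ [c])"
    using geodesic_snoc[OF p(1)] uc du geodesic_not_Nil[OF p(1)] unfolding u_def by simp
  show ?thesis
  proof (cases "c \<in> S")
    case True
    then show ?thesis using that[of "[c]"] pc by simp
  next
    case False
    then have "card ((nbrs E c \<inter> S) - {u}) = 1"
      using condition_iii[OF uc(1)] uc(2) p(2) unfolding u_def by simp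
    then obtain w where "(nbrs E c \<inter> S) - {u} = {w}"
      by (rule card_1_singletonE)
    then have cw: "{c, w} \<in> E" and "w \<in> S" "w \<noteq> u"
      unfolding nbrs_def by auto
    have "{c, u} \<in> E"
      using uc(1) by (simp add: insert_commute)
    then have "\<not> gdist E l w \<le> gdist E l c"
      using nearer_nbr_unique[OF leaf_in_V _ cw] uc(2) \<open>w \<noteq> u\<close> by force
    then have "gdist E l w = length (p @ [c])"
      using gdist_nbr_le[OF leaf_in_V cw] uc du geodesic_not_Nil[OF p(1)] by simp
    then have "geodesic E l (p @ [c, w])"
      using geodesic_snoc[OF pc] cw by simp
    then show ?thesis using that[of "[c, w]"] \<open>w \<in> S\<close> by simp
  qed
qed

lemma geodesic_extend_to_leaf:
  assumes "geodesic E l p" "last p \<in> S"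
  obtains q where "geodesic E l q" "set p \<subseteq> set q" "last q \<in> S" "last q \<noteq> l" "is_leaf V E (last q)"
  using assms
proof (induction "card V - length p" arbitrary: p rule: less_induct)
  case less
  show ?case
  proof (cases "last p \<noteq> l \<and> is_leaf V E (last p)")
    case True
    then show ?thesis using less.prems by blast
  next
    case False
    then obtain r where r: "r \<noteq> []" "geodesic E l (p @ r)" "last r \<in> S"
      using geodesic_extend_step less.prems(2,3) by blast
    have "length (p @ r) \<le> card V"
      using geodesic_length_le[OF r(2) leaf_in_V] .
    moreover have "length r > 0" using r(1) by simp
    ultimately have "card V - length (p @ r) < card V - length p"
      unfolding length_append by linarith
    from less.hyps[OF this _ r(2)] show ?thesis
      using less.prems(1) r(1,3) by auto
  qed
qed

end

end

theorem mainTheorem9: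
  fixes V :: "'a set" and E :: "'a set set" and S :: "'a set"
  assumes tree: "is_tree V E"
    and three: "card V \<ge> 3"
    and SV: "S \<subseteq> V"
    and I: "\<exists>l\<in>S. is_leaf V E l"
    and II: "\<forall>l\<in>S. is_leaf V E l \<longrightarrow>
       (\<forall>a b. {a, b} \<in> E \<and> gdist E l a < gdist E l b \<longrightarrow>
          (a \<notin> S \<and> b \<notin> S \<longrightarrow> nbrs E b \<inter> S = {}) \<and>
          (a \<notin> S \<and> b \<in> S \<longrightarrow> card (nbrs E b \<inter> S) \<le> 1) \<and>
          (a \<in> S \<and> b \<notin> S \<longrightarrow> card ((nbrs E b \<inter> S) - {a}) = 1) \<and>
          (a \<in> S \<and> b \<in> S \<longrightarrow> card ((nbrs E b \<inter> S) - {a}) = 0))"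
  shows "\<forall>v\<in>S. \<exists>l l' p. l \<in> S \<and> l' \<in> S \<and> is_leaf V E l \<and> is_leaf V E l' \<and> l \<noteq> l' \<and>
           gpath E p \<and> hd p = l \<and> last p = l' \<and> v \<in> set p"
proof
  fix v assume "v \<in> S"
  interpret tree V E using tree by (rule tree.intro)
  obtain l where l: "l \<in> S" "is_leaf V E l" using I by blast
  have condition_iii: "\<And>a b. {a, b} \<in> E \<Longrightarrow> gdist E l a < gdist E l b \<Longrightarrow> a \<in> S \<Longrightarrow> b \<notin> S
      \<Longrightarrow> card ((nbrs E b \<inter> S) - {a}) = 1"
    using II l by blast
  obtain p where p: "geodesic E l p" "last p = v"
    using exists_geodesic \<open>l \<in> S\<close> \<open>v \<in> S\<close> SV by blast
  obtain q where q: "geodesic E l q" "set p \<subseteq> set q" "last q \<in> S" "last q \<noteq> l" "is_leaf V E (last q)"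
    using geodesic_extend_to_leaf[OF l(2) condition_iii p(1)] p(2) \<open>v \<in> S\<close> by blast
  have "v \<in> set q"
    using p q(2) geodesic_not_Nil[OF p(1)] by auto
  then show "\<exists>l l' p. l \<in> S \<and> l' \<in> S \<and> is_leaf V E l \<and> is_leaf V E l' \<and> l \<noteq> l' \<and>
      gpath E p \<and> hd p = l \<and> last p = l' \<and> v \<in> set p"
    using l q geodesic_distinct[OF q(1)] unfolding gpath_def geodesic_def by metis
qed

end
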